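(* Let $\mathbb{P}$ be a class of closed formulas that is closed under conjunction. Then every safety problem provable in $\mathbf{FI}^{\mathbb{P}}$ is provable in $\mathbf{F}^{\mathbb{P}}$.
   Context: A first-order vocabulary $\Sigma$ consists of constant, function and relation symbols; $\Sigma'=\{a' : a\in\Sigma\}$ is a disjoint copy, and for a formula $\varphi$ over $\Sigma$, $\varphi'$ denotes $\varphi$ with every symbol replaced by its primed copy. A safety problem is a triple $(\iota,\tau,\beta)$, where $\iota,\beta$ are closed formulas over $\Sigma$ and $\tau$ is a closed formula over $\Sigma\uplus\Sigma'$. $A\Rightarrow B$ means the implication $A\to B$ is valid. Proofs: a proof of $\Pi$ in a system is a finite tree whose nodes are safety problems, whose root is $\Pi$, and in which each node together with its children is an instance of one of the system's inference rules, with side conditions valid. Rules ($\varphi$ ranges over closed formulas over $\Sigma$): (Ind): no premises; conclusion $(\iota,\tau,\neg\varphi)$; side conditions $\iota\Rightarrow\varphi$ and $\varphi\wedge\tau\Rightarrow\varphi'$. (Cons): premise $(\iota,\tau,\neg\varphi)$; conclusion $(\iota,\tau,\beta)$; side condition $\varphi\Rightarrow\neg\beta$. (Inc): premises $(\iota,\tau,\neg\varphi)$ and $(\iota\wedge\varphi,\ \tau\wedge\varphi\wedge\varphi',\ \beta\wedge\varphi)$; conclusion $(\iota,\tau,\beta)$. $\mathbf{F}$ consists of (Ind) and (Cons); $\mathbf{FI}$ consists of (Ind), (Cons), (Inc). For a class of closed formulas $\mathbb{P}$, $\mathbf{F}^{\mathbb{P}}$ and $\mathbf{FI}^{\mathbb{P}}$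 restrict applications of (Ind) to $\varphi\in\mathbb{P}$. *)

theory Defs
  imports Main
begin

text \<open>Function/constant symbols and relation symbols are drawn from a symbol type 'f
  (constants are 0-ary function symbols; equality is built in).\<close>

datatype 'f trm = Var nat | Fn 'f "'f trm list"

datatype 'f fm =
    Bot
  | Atom 'f "'f trm list"
  | Eq "'f trm" "'f trm"
  | Neg "'f fm"
  | Conj "'f fm" "'f fm"
  | Disj "'f fm" "'f fm"
  | Imp "'f fm" "'f fm"
  | Forall nat "'f fm"
  | Exists nat "'f fm"

primrec fvt :: "'f trm \<Rightarrow> nat set" where
  "fvt (Var n) = {n}"
| "fvt (Fn f ts) = \<Union> (set (map fvt ts))"

primrec fv :: "'f fm \<Rightarrow> nat set" where
  "fv Bot = {}"
| "fv (Atom r ts) = \<Union> (set (map fvt ts))"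
| "fv (Eq s t) = fvt s \<union> fvt t"
| "fv (Neg p) = fv p"
| "fv (Conj p q) = fv p \<union> fv q"
| "fv (Disj p q) = fv p \<union> fv q"
| "fv (Imp p q) = fv p \<union> fv q"
| "fv (Forall x p) = fv p - {x}"
| "fv (Exists x p) = fv p - {x}"

definition closed :: "'f fm \<Rightarrow> bool" where
  "closed p \<longleftrightarrow> fv p = {}"

primrec evalt :: "('f \<Rightarrow> 'u list \<Rightarrow> 'u) \<Rightarrow> (nat \<Rightarrow> 'u) \<Rightarrow> 'f trm \<Rightarrow> 'u" where
  "evalt F e (Var n) = e n"
| "evalt F e (Fn f ts) = F f (map (evalt F e) ts)"

primrec eval :: "'u set \<Rightarrow> ('f \<Rightarrow> 'u list \<Rightarrow> 'u) \<Rightarrow> ('f \<Rightarrow> 'u list \<Rightarrow> bool)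
                  \<Rightarrow> (nat \<Rightarrow> 'u) \<Rightarrow> 'f fm \<Rightarrow> bool" where
  "eval D F R e Bot = False"
| "eval D F R e (Atom r ts) = R r (map (evalt F e) ts)"
| "eval D F R e (Eq s t) = (evalt F e s = evalt F e t)"
| "eval D F R e (Neg p) = (\<not> eval D F R e p)"
| "eval D F R e (Conj p q) = (eval D F R e p \<and> eval D F R e q)"
| "eval D F R e (Disj p q) = (eval D F R e p \<or> eval D F R e q)"
| "eval D F R e (Imp p q) = (eval D F R e p \<longrightarrow> eval D F R e q)"
| "eval D F R e (Forall x p) = (\<forall>a\<in>D. eval D F R (e(x := a)) p)"
| "eval D F R e (Exists x p) = (\<exists>a\<in>D. eval D F R (e(x := a)) p)"

definition is_structure :: "'u set \<Rightarrow> ('f \<Rightarrow> 'u list \<Rightarrow> 'u) \<Rightarrow> bool" where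
  "is_structure D F \<longleftrightarrow> D \<noteq> {} \<and> (\<forall>f args. set args \<subseteq> D \<longrightarrow> F f args \<in> D)"

text \<open>Validity: truth in every structure (domain a nonempty subset of nat) under every
  assignment. By downward Loewenheim--Skolem this coincides with first-order validity.\<close>
definition valid :: "'f fm \<Rightarrow> bool" where
  "valid p \<longleftrightarrow> (\<forall>(D::nat set) F R e. is_structure D F \<longrightarrow> range e \<subseteq> D \<longrightarrow> eval D F R e p)"

text \<open>The vocabulary \<Sigma> is the symbol type 's; \<Sigma> \<uplus> \<Sigma>' is 's psym.\<close>
datatype 's psym = Cur 's | Nxt 's

fun prime_sym :: "'s psym \<Rightarrow> 's psym" where
  "prime_sym (Cur s) = Nxt s"
| "prime_sym (Nxt s) = Nxt s"

definition prime :: "'s psym fm \<Rightarrow> 's psym fm" where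
  "prime p = map_fm prime_sym p"

definition over_Sigma :: "'s psym fm \<Rightarrow> bool" where
  "over_Sigma p \<longleftrightarrow> set_fm p \<subseteq> range Cur"

definition closed_Sigma :: "'s psym fm \<Rightarrow> bool" where
  "closed_Sigma p \<longleftrightarrow> closed p \<and> over_Sigma p"

definition safety_problem :: "'s psym fm \<Rightarrow> 's psym fm \<Rightarrow> 's psym fm \<Rightarrow> bool" where
  "safety_problem \<iota> \<tau> \<beta> \<longleftrightarrow> closed_Sigma \<iota> \<and> closed \<tau> \<and> closed_Sigma \<beta>"

inductive provable_F :: "'s psym fm set \<Rightarrow> 's psym fm \<Rightarrow> 's psym fm \<Rightarrow> 's psym fm \<Rightarrow> bool"
  for P where
  Ind: "\<lbrakk> safety_problem \<iota> \<tau> (Neg \<phi>); closed_Sigma \<phi>; \<phi> \<in> P;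
          valid (Imp \<iota> \<phi>); valid (Imp (Conj \<phi> \<tau>) (prime \<phi>)) \<rbrakk>
        \<Longrightarrow> provable_F P \<iota> \<tau> (Neg \<phi>)"
| Cons: "\<lbrakk> safety_problem \<iota> \<tau> \<beta>; closed_Sigma \<phi>; provable_F P \<iota> \<tau> (Neg \<phi>);
          valid (Imp \<phi> (Neg \<beta>)) \<rbrakk>
        \<Longrightarrow> provable_F P \<iota> \<tau> \<beta>"

inductive provable_FI :: "'s psym fm set \<Rightarrow> 's psym fm \<Rightarrow> 's psym fm \<Rightarrow> 's psym fm \<Rightarrow> bool"
  for P where
  Ind: "\<lbrakk> safety_problem \<iota> \<tau> (Neg \<phi>); closed_Sigma \<phi>; \<phi> \<in> P;
          valid (Imp \<iota> \<phi>); valid (Imp (Conj \<phi> \<tau>) (prime \<phi>)) \<rbrakk>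
        \<Longrightarrow> provable_FI P \<iota> \<tau> (Neg \<phi>)"
| Cons: "\<lbrakk> safety_problem \<iota> \<tau> \<beta>; closed_Sigma \<phi>; provable_FI P \<iota> \<tau> (Neg \<phi>);
          valid (Imp \<phi> (Neg \<beta>)) \<rbrakk>
        \<Longrightarrow> provable_FI P \<iota> \<tau> \<beta>"
| Inc: "\<lbrakk> safety_problem \<iota> \<tau> \<beta>; closed_Sigma \<phi>; provable_FI P \<iota> \<tau> (Neg \<phi>);
          provable_FI P (Conj \<iota> \<phi>) (Conj \<tau> (Conj \<phi> (prime \<phi>))) (Conj \<beta> \<phi>) \<rbrakk>
        \<Longrightarrow> provable_FI P \<iota> \<tau> \<beta>"

end

theory Submission
  imports Defs
begin

text \<open>An \<open>\<^bold>F\<close>-proof is the same as a single inductive invariant \<open>\<psi> \<in> P\<close> that excludes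
  the bad states. The rule (Inc) is eliminated by conjoining invariants: if \<open>\<psi>\<^sub>1\<close> is an
  inductive invariant entailing \<open>\<phi>\<close> and \<open>\<psi>\<^sub>2\<close> is an inductive invariant of the problem
  restricted to \<open>\<phi>\<close>, then \<open>\<psi>\<^sub>1 \<and> \<psi>\<^sub>2\<close> is inductive for the unrestricted problem, because
  from a \<open>\<psi>\<^sub>1\<close>-state every \<open>\<tau>\<close>-step already satisfies \<open>\<phi> \<and> \<phi>'\<close>.\<close>

lemma evalt_map_trm: "evalt F e (map_trm g t) = evalt (\<lambda>f. F (g f)) e t"
  by (induction t) (auto cong: map_cong)

lemma eval_map_fm: "eval D F R e (map_fm g p) = eval D (\<lambda>f. F (g f)) (\<lambda>r. R (g r)) e p"
  by (induction p arbitrary: e) (simp_all add: evalt_map_trm comp_def cong: map_cong)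

lemma valid_map_fm:
  fixes g :: "'a \<Rightarrow> 'b"
  assumes "valid p"
  shows "valid (map_fm g p)"
  unfolding valid_def eval_map_fm
proof (intro allI impI)
  fix D :: "nat set" and F :: "'b \<Rightarrow> nat list \<Rightarrow> nat" and R and e :: "nat \<Rightarrow> nat"
  assume "is_structure D F" and "range e \<subseteq> D"
  moreover from \<open>is_structure D F\<close> have "is_structure D (\<lambda>f. F (g f))"
    unfolding is_structure_def by simp
  ultimately show "eval D (\<lambda>f. F (g f)) (\<lambda>r. R (g r)) e p"
    using assms unfolding valid_def by simp
qed

lemma valid_prime: "valid p \<Longrightarrow> valid (prime p)"
  unfolding prime_def by (rule valid_map_fm)

lemma prime_Imp [simp]: "prime (Imp p q) = Imp (prime p) (prime q)"
  and prime_Conj [simp]: "prime (Conj p q) = Conj (prime p) (prime q)"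
  by (simp_all add: prime_def)

lemma valid_Imp:
  "valid (Imp p q) \<longleftrightarrow>
    (\<forall>(D::nat set) F R e. is_structure D F \<longrightarrow> range e \<subseteq> D \<longrightarrow> eval D F R e p \<longrightarrow> eval D F R e q)"
  by (auto simp: valid_def)

lemma valid_Imp_trans: "valid (Imp p q) \<Longrightarrow> valid (Imp q r) \<Longrightarrow> valid (Imp p r)"
  by (simp add: valid_Imp)

lemma valid_Imp_Neg_Neg: "valid (Imp p (Neg (Neg q))) \<longleftrightarrow> valid (Imp p q)"
  by (simp add: valid_Imp)

lemma closed_Sigma_Neg: "closed_Sigma (Neg p) \<longleftrightarrow> closed_Sigma p"
  unfolding closed_Sigma_def closed_def over_Sigma_def by simp

definition inductive_invariant :: "'s psym fm \<Rightarrow> 's psym fm \<Rightarrow> 's psym fm \<Rightarrow> bool" where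
  "inductive_invariant \<iota> \<tau> \<psi> \<longleftrightarrow> valid (Imp \<iota> \<psi>) \<and> valid (Imp (Conj \<psi> \<tau>) (prime \<psi>))"

lemma provable_F_iff_inductive_invariant:
  "provable_F P \<iota> \<tau> \<beta> \<longleftrightarrow> safety_problem \<iota> \<tau> \<beta> \<and>
    (\<exists>\<psi>\<in>P. closed_Sigma \<psi> \<and> inductive_invariant \<iota> \<tau> \<psi> \<and> valid (Imp \<psi> (Neg \<beta>)))"
    (is "?provable \<longleftrightarrow> ?invariant")
proof
  assume ?provable
  then show ?invariant
  proof (induction rule: provable_F.induct)
    case (Ind \<iota> \<tau> \<phi>)
    moreover have "valid (Imp \<phi> (Neg (Neg \<phi>)))"
      by (simp add: valid_Imp)
    ultimately show ?case
      unfolding inductive_invariant_def by blast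
  next
    case (Cons \<iota> \<tau> \<beta> \<phi>)
    then obtain \<psi> where "\<psi> \<in> P" "closed_Sigma \<psi>" "inductive_invariant \<iota> \<tau> \<psi>"
      "valid (Imp \<psi> \<phi>)"
      by (auto simp: valid_Imp_Neg_Neg)
    with Cons.hyps show ?case
      by (blast intro: valid_Imp_trans)
  qed
next
  assume ?invariant
  then obtain \<psi> where "safety_problem \<iota> \<tau> \<beta>" "\<psi> \<in> P" "closed_Sigma \<psi>"
    "inductive_invariant \<iota> \<tau> \<psi>" "valid (Imp \<psi> (Neg \<beta>))"
    by blast
  moreover from this have "safety_problem \<iota> \<tau> (Neg \<psi>)"
    by (simp add: safety_problem_def closed_Sigma_Neg)
  ultimately have "provable_F P \<iota> \<tau> (Neg \<psi>)"
    unfolding inductive_invariant_def by (blast intro: provable_F.Ind)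
  from \<open>safety_problem \<iota> \<tau> \<beta>\<close> \<open>closed_Sigma \<psi>\<close> this \<open>valid (Imp \<psi> (Neg \<beta>))\<close>
  show ?provable
    by (rule provable_F.Cons)
qed

lemma inductive_invariant_Conj_restricted:
  assumes "inductive_invariant \<iota> \<tau> \<psi>\<^sub>1" and "valid (Imp \<psi>\<^sub>1 \<phi>)"
    and "inductive_invariant (Conj \<iota> \<phi>) (Conj \<tau> (Conj \<phi> (prime \<phi>))) \<psi>\<^sub>2"
  shows "inductive_invariant \<iota> \<tau> (Conj \<psi>\<^sub>1 \<psi>\<^sub>2)"
proof -
  have "valid (Imp (prime \<psi>\<^sub>1) (prime \<phi>))"
    using valid_prime[OF \<open>valid (Imp \<psi>\<^sub>1 \<phi>)\<close>] by simp
  with assms have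
    "eval D F R e \<iota> \<longrightarrow> eval D F R e \<psi>\<^sub>1 \<and> eval D F R e \<psi>\<^sub>2"
    "eval D F R e \<psi>\<^sub>1 \<and> eval D F R e \<psi>\<^sub>2 \<and> eval D F R e \<tau> \<longrightarrow>
       eval D F R e (prime \<psi>\<^sub>1) \<and> eval D F R e (prime \<psi>\<^sub>2)"
    if "is_structure D F" and "range e \<subseteq> D" for D :: "nat set" and F R e
    using that unfolding inductive_invariant_def valid_Imp eval.simps by meson+
  then show ?thesis
    unfolding inductive_invariant_def valid_Imp by simp
qed

theorem corollary4p8:
  fixes P :: "'s psym fm set"
  assumes "\<forall>\<phi>\<in>P. closed_Sigma \<phi>"
    and "\<forall>\<phi>\<in>P. \<forall>\<psi>\<in>P. Conj \<phi> \<psi> \<in> P"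
    and "provable_FI P \<iota> \<tau> \<beta>"
  shows "provable_F P \<iota> \<tau> \<beta>"
  using assms(3)
proof (induction rule: provable_FI.induct)
  case (Ind \<iota> \<tau> \<phi>)
  then show ?case by (rule provable_F.Ind)
next
  case (Cons \<iota> \<tau> \<beta> \<phi>)
  from Cons.hyps(1,2) Cons.IH Cons.hyps(4) show ?case
    by (rule provable_F.Cons)
next
  case (Inc \<iota> \<tau> \<beta> \<phi>)
  obtain \<psi>\<^sub>1 where "\<psi>\<^sub>1 \<in> P" "inductive_invariant \<iota> \<tau> \<psi>\<^sub>1" "valid (Imp \<psi>\<^sub>1 \<phi>)"
    using Inc.IH(1) by (auto simp: provable_F_iff_inductive_invariant valid_Imp_Neg_Neg)
  moreover obtain \<psi>\<^sub>2 where "\<psi>\<^sub>2 \<in> P"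
    "inductive_invariant (Conj \<iota> \<phi>) (Conj \<tau> (Conj \<phi> (prime \<phi>))) \<psi>\<^sub>2"
    "valid (Imp \<psi>\<^sub>2 (Neg (Conj \<beta> \<phi>)))"
    using Inc.IH(2) by (auto simp: provable_F_iff_inductive_invariant)
  moreover have "valid (Imp (Conj \<psi>\<^sub>1 \<psi>\<^sub>2) (Neg \<beta>))"
    using calculation unfolding valid_Imp eval.simps by meson
  ultimately show ?case
    using assms(1,2) Inc.hyps(1)
    by (auto simp: provable_F_iff_inductive_invariant intro: inductive_invariant_Conj_restricted)
qed

end
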